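(* Let \[ C=\begin{pmatrix}O&-I\\O&O\end{pmatrix},\qquad D=\begin{pmatrix}O&O\\O&2I\end{pmatrix}, \] and let $K$ be a symmetric non-negative definite $2n\times2n$ matrix. Then there is a solution $N(t)$, $t>0$, of the matrix Riccati equation \[ \dot N=NC+C^TN+NDN-K \] such that $\lim_{t\to0}N(t)^{-1}=0$, $N(t)\le0$ and $\dot N(t)\ge0$ for $t>0$.
   Context: $I$ and $O$ are the $n\times n$ identity and zero matrices; matrices are $2\times2$ block matrices of $n\times n$ blocks; inequalities between symmetric matrices are in the sense of quadratic forms. *)

theory Defs
  imports "HOL-Analysis.Analysis"
begin

text \<open>2n x 2n matrices are indexed by the sum type 'n + 'n (first block = Inl, second = Inr).
  Inequalities between matrices are in the sense of quadratic forms.\<close>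

definition mat_nonneg :: "real^'m^'m \<Rightarrow> bool" where
  "mat_nonneg X \<longleftrightarrow> (\<forall>x. 0 \<le> x \<bullet> (X *v x))"

definition mat_nonpos :: "real^'m^'m \<Rightarrow> bool" where
  "mat_nonpos X \<longleftrightarrow> (\<forall>x. x \<bullet> (X *v x) \<le> 0)"

definition Cmat :: "real^('n::finite + 'n)^('n + 'n)" where
  "Cmat = (\<chi> i j. case (i, j) of (Inl a, Inr b) \<Rightarrow> (if a = b then -1 else 0) | _ \<Rightarrow> 0)"

definition Dmat :: "real^('n::finite + 'n)^('n + 'n)" where
  "Dmat = (\<chi> i j. case (i, j) of (Inr a, Inr b) \<Rightarrow> (if a = b then 2 else 0) | _ \<Rightarrow> 0)"

end

theory Submission
  imports Defs
begin

text \<open>The solution is \<open>N = Y X\<inverse>\<close>, where \<open>X' = -CX - DY\<close>, \<open>Y' = -KX + C\<^sup>TY\<close>, \<open>X(0) = O\<close>,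
  \<open>Y(0) = I\<close> is the linear Hamiltonian system behind the Riccati equation. Along it the form
  \<open>Y\<^sup>TX\<close> stays symmetric, so \<open>N\<close> is symmetric; the pairing \<open>Xv \<bullet> Yv\<close> starts at \<open>0\<close> and has derivative
  \<open>-(Xv \<bullet> KXv + Yv \<bullet> DYv) \<le> 0\<close>, so \<open>N \<le> 0\<close>; and the conserved Hamiltonian gives
  \<open>u \<bullet> N'u = v \<bullet> Dv \<ge> 0\<close> with \<open>v = X\<inverse>u\<close>. \<open>X(t)\<close> is invertible for \<open>t > 0\<close> because the pair
  \<open>(C, D)\<close> is controllable, and \<open>N\<inverse> = XY\<inverse> \<rightarrow> O\<close> as \<open>t \<rightarrow> 0\<close>.\<close>

section \<open>Linear ODEs through the exponential of bounded endomorphisms\<close>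

text \<open>Neither real square matrices nor bounded linear maps are Banach algebras in the library. A copy
  of the bounded endomorphisms with composition as product is one, and its exponential solves linear
  ODEs.\<close>

typedef (overloaded) 'a endo = "UNIV :: ('a::euclidean_space \<Rightarrow>\<^sub>L 'a) set" by auto

instantiation endo :: (euclidean_space) real_normed_vector
begin
definition "0 = Abs_endo 0"
definition "a + b = Abs_endo (Rep_endo a + Rep_endo b)"
definition "a - b = Abs_endo (Rep_endo a - Rep_endo b)"
definition "- a = Abs_endo (- Rep_endo a)"
definition "scaleR r a = Abs_endo (r *\<^sub>R Rep_endo a)"
definition "norm a = norm (Rep_endo a)"
definition "sgn (a::'a endo) = Abs_endo (sgn (Rep_endo a))"
definition "dist (a::'a endo) b = dist (Rep_endo a) (Rep_endo b)"
definition "uniformity = (INF e\<in>{0<..}. principal {(x::'a endo, y). dist x y < e})"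
definition "open (U::'a endo set) = (\<forall>x\<in>U. \<forall>\<^sub>F (x', y) in uniformity. x' = x \<longrightarrow> y \<in> U)"
instance
proof
  fix a b c :: "'a endo" and r s :: real
  show "a + b + c = a + (b + c)" by (simp add: plus_endo_def Abs_endo_inverse add.assoc)
  show "a + b = b + a" by (simp add: plus_endo_def add.commute)
  show "0 + a = a" by (simp add: plus_endo_def zero_endo_def Abs_endo_inverse Rep_endo_inverse)
  show "- a + a = 0" by (simp add: plus_endo_def zero_endo_def uminus_endo_def Abs_endo_inverse)
  show "a - b = a + - b" by (simp add: plus_endo_def minus_endo_def uminus_endo_def Abs_endo_inverse)
  show "r *\<^sub>R (a + b) = r *\<^sub>R a + r *\<^sub>R b"
    by (simp add: plus_endo_def scaleR_endo_def Abs_endo_inverse scaleR_add_right)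
  show "(r + s) *\<^sub>R a = r *\<^sub>R a + s *\<^sub>R a"
    by (simp add: plus_endo_def scaleR_endo_def Abs_endo_inverse scaleR_add_left)
  show "r *\<^sub>R s *\<^sub>R a = (r * s) *\<^sub>R a" by (simp add: scaleR_endo_def Abs_endo_inverse)
  show "1 *\<^sub>R a = a" by (simp add: scaleR_endo_def Rep_endo_inverse)
  show "sgn a = inverse (norm a) *\<^sub>R a" by (simp add: sgn_endo_def scaleR_endo_def norm_endo_def sgn_div_norm)
  show "dist a b = norm (a - b)" by (simp add: dist_endo_def norm_endo_def minus_endo_def Abs_endo_inverse dist_norm)
  show "norm a = 0 \<longleftrightarrow> a = 0"
    by (metis Abs_endo_inverse Rep_endo_inverse UNIV_I norm_eq_zero norm_endo_def zero_endo_def)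
  show "norm (a + b) \<le> norm a + norm b"
    by (simp add: plus_endo_def norm_endo_def Abs_endo_inverse norm_triangle_ineq)
  show "norm (r *\<^sub>R a) = \<bar>r\<bar> * norm a" by (simp add: scaleR_endo_def norm_endo_def Abs_endo_inverse)
qed (simp_all add: uniformity_endo_def open_endo_def)
end

instantiation endo :: (euclidean_space) real_normed_algebra_1
begin
definition "a * b = Abs_endo (Rep_endo a o\<^sub>L Rep_endo b)"
definition "1 = Abs_endo id_blinfun"
instance
proof
  fix a b c :: "'a endo" and r :: real
  show "a * b * c = a * (b * c)"
    by (simp add: times_endo_def Abs_endo_inverse) (rule arg_cong[where f=Abs_endo], rule blinfun_eqI, simp)
  show "(a + b) * c = a * c + b * c"
    by (simp add: times_endo_def plus_endo_def Abs_endo_inverse)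
      (rule arg_cong[where f=Abs_endo], rule blinfun_eqI, simp add: blinfun.bilinear_simps)
  show "a * (b + c) = a * b + a * c"
    by (simp add: times_endo_def plus_endo_def Abs_endo_inverse)
      (rule arg_cong[where f=Abs_endo], rule blinfun_eqI, simp add: blinfun.bilinear_simps)
  have "id_blinfun o\<^sub>L Rep_endo a = Rep_endo a" "Rep_endo a o\<^sub>L id_blinfun = Rep_endo a"
    by (rule blinfun_eqI, simp)+
  then show "1 * a = a" "a * 1 = a"
    by (simp_all add: times_endo_def one_endo_def Abs_endo_inverse Rep_endo_inverse)
  have "norm (0::'a endo) \<noteq> norm (1::'a endo)"
    by (simp add: one_endo_def norm_endo_def Abs_endo_inverse zero_endo_def)
  then show "(0::'a endo) \<noteq> 1" by metis
  show "r *\<^sub>R a * b = r *\<^sub>R (a * b)" "a * r *\<^sub>R b = r *\<^sub>R (a * b)"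
    by (simp_all add: times_endo_def scaleR_endo_def Abs_endo_inverse)
      (rule arg_cong[where f=Abs_endo], rule blinfun_eqI, simp add: blinfun.bilinear_simps)+
  show "norm (a * b) \<le> norm a * norm b"
    by (simp add: times_endo_def norm_endo_def Abs_endo_inverse norm_blinfun_compose)
  show "norm (1::'a endo) = 1" by (simp add: one_endo_def norm_endo_def Abs_endo_inverse)
qed
end

lemma norm_Rep_endo: "norm (Rep_endo a) = norm a"
  by (simp add: norm_endo_def)

lemma Rep_endo_diff: "Rep_endo (a - b) = Rep_endo a - Rep_endo b"
  by (simp add: minus_endo_def Abs_endo_inverse)

instance endo :: (euclidean_space) banach
proof
  fix X :: "nat \<Rightarrow> 'a endo"
  assume "Cauchy X"
  then have "Cauchy (\<lambda>n. Rep_endo (X n))"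
    unfolding Cauchy_def dist_norm by (metis Rep_endo_diff norm_Rep_endo)
  then obtain L where "(\<lambda>n. Rep_endo (X n)) \<longlonglongrightarrow> L"
    using convergent_eq_Cauchy convergent_def by metis
  then have "X \<longlonglongrightarrow> Abs_endo L"
    unfolding LIMSEQ_def dist_norm by (metis Abs_endo_inverse Rep_endo_diff UNIV_I norm_Rep_endo)
  then show "convergent X"
    by (auto simp: convergent_def)
qed

lemma linear_ode_solution_exists:
  fixes f :: "'a::euclidean_space \<Rightarrow> 'a"
  assumes "linear f"
  shows "\<exists>z. z 0 = z0 \<and> (\<forall>t. (z has_vector_derivative f (z t)) (at t))"
proof -
  have f: "bounded_linear f"
    using assms linear_conv_bounded_linear by auto
  define A where "A = Abs_endo (Blinfun f)"
  define z where "z t = Rep_endo (exp (t *\<^sub>R A)) z0" for t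
  have eval: "bounded_linear (\<lambda>E::'a endo. Rep_endo E z0)"
  proof (rule bounded_linear_intro[where K="norm z0"])
    fix a b :: "'a endo" and r :: real
    show "Rep_endo (a + b) z0 = Rep_endo a z0 + Rep_endo b z0"
      by (simp add: plus_endo_def Abs_endo_inverse blinfun.add_left)
    show "Rep_endo (r *\<^sub>R a) z0 = r *\<^sub>R Rep_endo a z0"
      by (simp add: scaleR_endo_def Abs_endo_inverse blinfun.scaleR_left)
    show "norm (Rep_endo a z0) \<le> norm a * norm z0"
      by (simp add: norm_endo_def norm_blinfun)
  qed
  have "z 0 = z0"
    by (simp add: z_def one_endo_def Abs_endo_inverse)
  moreover have "(z has_vector_derivative f (z t)) (at t)" for t
    using bounded_linear.has_vector_derivative[OF eval exp_scaleR_has_vector_derivative_left[of A t]]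
    unfolding z_def by (simp add: times_endo_def A_def Abs_endo_inverse bounded_linear_Blinfun_apply[OF f])
  ultimately show ?thesis by blast
qed

section \<open>Matrix calculus\<close>

lemma matrix_add_rdistrib: "(B + C) ** A = B ** A + C ** A"
  by (vector matrix_matrix_mult_def sum.distrib[symmetric] field_simps)

lemma matrix_vector_mult_uminus_left: "(- A) *v x = - (A *v (x::'a::ring_1^_))"
  and matrix_vector_mult_uminus_right: "A *v (- x) = - (A *v (x::'a::ring_1^_))"
  by (simp_all add: matrix_vector_mult_def vec_eq_iff sum_negf)

lemma bounded_bilinear_matrix_matrix_mult:
  "bounded_bilinear ((**) :: real^'n^'m \<Rightarrow> real^'p^'n \<Rightarrow> real^'p^'m)"
  unfolding bilinear_conv_bounded_bilinear[symmetric]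
  by (simp add: bilinear_def linear_iff matrix_add_ldistrib matrix_add_rdistrib scalar_matrix_assoc
      matrix_scalar_ac)

lemma bounded_bilinear_matrix_vector_mult:
  "bounded_bilinear ((*v) :: real^'n^'m \<Rightarrow> real^'n \<Rightarrow> real^'m)"
  unfolding bilinear_conv_bounded_bilinear[symmetric]
  by (simp add: bilinear_def linear_iff algebra_simps matrix_scaleR_vector_ac scaleR_matrix_vector_assoc)

lemma inner_transpose_left: "(transpose A *v x) \<bullet> y = x \<bullet> (A *v (y::real^_))"
  by (simp add: dot_lmul_matrix)

lemma inner_transpose_right: "x \<bullet> (transpose A *v y) = (A *v x) \<bullet> (y::real^_)"
  by (metis inner_commute inner_transpose_left)

lemma inner_symmetric_matrix: "transpose A = A \<Longrightarrow> (A *v x) \<bullet> y = x \<bullet> (A *v (y::real^_))"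
  by (metis inner_transpose_left)

lemma mat_nonneg_quadratic_form_zero:
  fixes K :: "real^'n^'n"
  assumes "transpose K = K" and "mat_nonneg K" and "x \<bullet> (K *v x) = 0"
  shows "K *v x = 0"
proof -
  define w where "w = K *v x"
  define b where "b = w \<bullet> (K *v w)"
  have "0 \<le> (x - r *\<^sub>R w) \<bullet> (K *v (x - r *\<^sub>R w))" for r
    using assms(2) by (simp add: mat_nonneg_def)
  also have "(x - r *\<^sub>R w) \<bullet> (K *v (x - r *\<^sub>R w)) = r\<^sup>2 * b - 2 * r * (w \<bullet> w)" for r
    using assms(3) inner_symmetric_matrix[OF assms(1), of w x]
    by (simp add: algebra_simps inner_diff_left inner_diff_right b_def power2_eq_square inner_commute w_def)
  finally have quadratic: "2 * r * (w \<bullet> w) \<le> r\<^sup>2 * b" for r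
    by simp
  have "0 \<le> b"
    using assms(2) by (simp add: mat_nonneg_def b_def)
  have "w \<bullet> w \<le> 0"
  proof (rule ccontr)
    assume "\<not> w \<bullet> w \<le> 0"
    then have a: "0 < w \<bullet> w" by linarith
    define r where "r = (w \<bullet> w) / (b + 1)"
    have "0 < r"
      using a \<open>0 \<le> b\<close> by (simp add: r_def)
    have "r * b < w \<bullet> w"
      using a \<open>0 \<le> b\<close> by (simp add: r_def field_simps)
    have "r\<^sup>2 * b = r * (r * b)"
      by (simp add: power2_eq_square)
    also have "\<dots> < r * (w \<bullet> w)"
      using \<open>0 < r\<close> \<open>r * b < w \<bullet> w\<close> by simp
    also have "\<dots> < 2 * r * (w \<bullet> w)"
      using \<open>0 < r\<close> a by simp
    finally show False
      using quadratic[of r] by simp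
  qed
  then show ?thesis
    by (metis inner_ge_zero inner_eq_zero_iff order_antisym w_def)
qed

lemma tendsto_det:
  fixes A :: "'b \<Rightarrow> real^'n^'n"
  shows "(A \<longlongrightarrow> A0) F \<Longrightarrow> ((\<lambda>s. det (A s)) \<longlongrightarrow> det A0) F"
  unfolding det_def by (intro tendsto_intros)

lemma matrix_inv_right:
  fixes A :: "real^'n^'n"
  shows "invertible A \<Longrightarrow> A ** matrix_inv A = mat 1"
  and matrix_inv_left: "invertible A \<Longrightarrow> matrix_inv A ** A = mat 1"
  unfolding invertible_def matrix_inv_def by (metis (mono_tags, lifting) someI_ex)+

lemma matrix_inv_cancel:
  fixes A :: "real^'n^'n"
  assumes "invertible A"
  shows "A *v (matrix_inv A *v x) = x" "matrix_inv A *v (A *v x) = x"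
  by (simp_all add: matrix_vector_mul_assoc matrix_inv_right[OF assms] matrix_inv_left[OF assms])

lemma matrix_inv_unique:
  fixes A B :: "real^'n^'n"
  assumes "A ** B = mat 1"
  shows "matrix_inv A = B"
proof -
  have "invertible A"
    using assms invertible_right_inverse by blast
  then have "matrix_inv A = matrix_inv A ** (A ** B)"
    by (simp add: assms)
  also have "\<dots> = B"
    by (simp add: matrix_mul_assoc matrix_inv_left[OF \<open>invertible A\<close>])
  finally show ?thesis .
qed

lemma invertible_matrix_inv:
  fixes A :: "real^'n^'n"
  shows "invertible A \<Longrightarrow> invertible (matrix_inv A)"
  using matrix_inv_left matrix_inv_right unfolding invertible_def by blast

lemma invertible_iff_trivial_kernel:
  fixes A :: "real^'n^'n"
  shows "invertible A \<longleftrightarrow> (\<forall>x. A *v x = 0 \<longrightarrow> x = 0)"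
proof -
  have "inj ((*v) A) \<longleftrightarrow> (\<forall>x. A *v x = 0 \<longrightarrow> x = 0)"
  proof
    assume "\<forall>x. A *v x = 0 \<longrightarrow> x = 0"
    then show "inj ((*v) A)"
      by (intro injI) (metis eq_iff_diff_eq_0 matrix_vector_mult_diff_distrib)
  qed (metis injD matrix_vector_mult_0_right)
  then show ?thesis
    using matrix_left_invertible_injective invertible_left_inverse by blast
qed

lemma matrix_inv_cramer:
  fixes A :: "real^'n^'n"
  assumes "det A \<noteq> 0"
  shows "matrix_inv A = (\<chi> k j. det (\<chi> i l. if l = k then axis j 1 $ i else A $ i $ l) / det A)"
proof (intro vec_eq_iff[THEN iffD2] allI)
  fix k j
  have "A *v (matrix_inv A *v axis j 1) = axis j 1"
    using assms invertible_det_nz matrix_inv_cancel by blast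
  then have "matrix_inv A *v axis j 1 = (\<chi> k. det (\<chi> i l. if l = k then axis j 1 $ i else A $ i $ l) / det A)"
    using cramer[OF assms] by blast
  then show "matrix_inv A $ k $ j = (\<chi> k j. det (\<chi> i l. if l = k then axis j 1 $ i else A $ i $ l) / det A) $ k $ j"
    by (simp add: matrix_vector_mult_basis column_def vec_eq_iff)
qed

lemma tendsto_matrix_inv:
  fixes A :: "'b \<Rightarrow> real^'n^'n"
  assumes lim: "(A \<longlongrightarrow> A0) F" and "invertible A0"
  shows "((\<lambda>s. matrix_inv (A s)) \<longlongrightarrow> matrix_inv A0) F"
proof -
  have det: "det A0 \<noteq> 0"
    using assms(2) invertible_det_nz by blast
  have "((\<lambda>s. (\<chi> k j. det (\<chi> i l. if l = k then axis j 1 $ i else A s $ i $ l) / det (A s)) :: real^'n^'n)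
     \<longlongrightarrow> (\<chi> k j. det (\<chi> i l. if l = k then axis j 1 $ i else A0 $ i $ l) / det A0)) F"
    by (intro tendsto_vec_lambda tendsto_divide tendsto_det det lim)
      (auto intro!: tendsto_intros lim)
  moreover have "\<forall>\<^sub>F s in F. det (A s) \<noteq> 0"
    using tendsto_imp_eventually_ne[OF tendsto_det[OF lim] det] .
  ultimately show ?thesis
    unfolding matrix_inv_cramer[OF det]
    by (elim Lim_transform_eventually eventually_mono) (simp add: matrix_inv_cramer)
qed

lemma has_vector_derivative_iff_difference_quotient:
  fixes f :: "real \<Rightarrow> 'a::real_normed_vector"
  shows "(f has_vector_derivative D) (at t) \<longleftrightarrow> ((\<lambda>s. (f s - f t) /\<^sub>R (s - t)) \<longlongrightarrow> D) (at t)"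
proof -
  have "\<forall>\<^sub>F s in at t. norm (f s - f t - (s - t) *\<^sub>R D) / norm (s - t) = norm ((f s - f t) /\<^sub>R (s - t) - D)"
    unfolding eventually_at_filter
  proof (intro always_eventually allI impI)
    fix s assume "s \<noteq> t"
    then have "(f s - f t) /\<^sub>R (s - t) - D = inverse (s - t) *\<^sub>R (f s - f t - (s - t) *\<^sub>R D)"
      by (simp add: scaleR_diff_right)
    then show "norm (f s - f t - (s - t) *\<^sub>R D) / norm (s - t) = norm ((f s - f t) /\<^sub>R (s - t) - D)"
      by (simp add: divide_inverse_commute)
  qed
  then have "((\<lambda>s. norm (f s - f t - (s - t) *\<^sub>R D) / norm (s - t)) \<longlongrightarrow> 0) (at t) \<longleftrightarrow>
      ((\<lambda>s. norm ((f s - f t) /\<^sub>R (s - t) - D)) \<longlongrightarrow> 0) (at t)"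
    by (rule tendsto_cong)
  then show ?thesis
    unfolding has_vector_derivative_def has_derivative_iff_norm
    by (simp add: bounded_linear_scaleR_left tendsto_norm_zero_iff Lim_null[symmetric])
qed

lemma has_vector_derivative_matrix_inv:
  fixes X :: "real \<Rightarrow> real^'n^'n"
  assumes X': "(X has_vector_derivative X') (at t)" and "invertible (X t)"
  shows "((\<lambda>s. matrix_inv (X s)) has_vector_derivative - (matrix_inv (X t) ** X' ** matrix_inv (X t))) (at t)"
proof -
  have X: "(X \<longlongrightarrow> X t) (at t)"
    using has_vector_derivative_continuous[OF X'] by (simp add: continuous_at)
  have "((\<lambda>s. - (matrix_inv (X s) ** ((X s - X t) /\<^sub>R (s - t) ** matrix_inv (X t))))
      \<longlongrightarrow> - (matrix_inv (X t) ** (X' ** matrix_inv (X t)))) (at t)"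
    using X' unfolding has_vector_derivative_iff_difference_quotient
    by (intro tendsto_minus bounded_bilinear.tendsto[OF bounded_bilinear_matrix_matrix_mult]
        tendsto_matrix_inv[OF X assms(2)] tendsto_const)
  moreover have "\<forall>\<^sub>F s in at t. det (X s) \<noteq> 0"
    using tendsto_imp_eventually_ne[OF tendsto_det[OF X]] assms(2) invertible_det_nz by blast
  then have "\<forall>\<^sub>F s in at t. invertible (X s)"
    by (simp add: invertible_det_nz)
  then have "\<forall>\<^sub>F s in at t. - (matrix_inv (X s) ** ((X s - X t) /\<^sub>R (s - t) ** matrix_inv (X t))) =
      (matrix_inv (X s) - matrix_inv (X t)) /\<^sub>R (s - t)"
  proof eventually_elim
    case (elim s)
    have resolvent: "matrix_inv (X s) ** ((X s - X t) ** matrix_inv (X t)) = matrix_inv (X t) - matrix_inv (X s)"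
      unfolding matrix_eq
      by (simp add: matrix_vector_mul_assoc[symmetric] matrix_vector_mult_diff_rdistrib
          matrix_vector_mult_diff_distrib matrix_inv_cancel[OF elim] matrix_inv_cancel[OF assms(2)])
    have scaled: "matrix_inv (X s) ** ((X s - X t) /\<^sub>R (s - t) ** matrix_inv (X t)) =
        (matrix_inv (X s) ** ((X s - X t) ** matrix_inv (X t))) /\<^sub>R (s - t)"
      by (simp add: matrix_scalar_ac scalar_matrix_assoc[symmetric])
    show ?case
      unfolding scaled resolvent by (simp add: algebra_simps)
  qed
  ultimately have "((\<lambda>s. (matrix_inv (X s) - matrix_inv (X t)) /\<^sub>R (s - t))
      \<longlongrightarrow> - (matrix_inv (X t) ** X' ** matrix_inv (X t))) (at t)"
    unfolding matrix_mul_assoc by (rule Lim_transform_eventually)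
  then show ?thesis
    unfolding has_vector_derivative_iff_difference_quotient .
qed

lemma has_vector_derivative_eq_0_if_locally_0:
  assumes "(f has_vector_derivative f') (at x)" and "open S" and "x \<in> S" and "\<And>y. y \<in> S \<Longrightarrow> f y = 0"
  shows "f' = 0"
proof -
  have "((\<lambda>_. 0) has_vector_derivative f') (at x)"
    using has_vector_derivative_transform_within_open[OF assms(1-3)] assms(4) by auto
  then show ?thesis
    using has_vector_derivative_const vector_derivative_unique_at by blast
qed

lemma has_vector_derivative_matrix_vector_mult_left:
  "(f has_vector_derivative f') F \<Longrightarrow> ((\<lambda>s. A *v f s) has_vector_derivative A *v f') F"
  for A :: "real^'n^'m"
  using bounded_linear.has_vector_derivative[OF matrix_vector_mul_bounded_linear] .

text \<open>The left-hand side is what the product rule gives for \<open>(Y X\<inverse>)'\<close> along the Hamiltonian flow.\<close>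

lemma riccati_identity:
  fixes X Y C D K :: "real^'n^'n"
  assumes "invertible X"
  defines "N \<equiv> Y ** matrix_inv X"
  shows "Y ** (- (matrix_inv X ** (- (C ** X) - D ** Y) ** matrix_inv X))
       + (- (K ** X) + transpose C ** Y) ** matrix_inv X
       = N ** C + transpose C ** N + N ** D ** N - K"
proof -
  have "Y *v (- (matrix_inv X *v (- (C *v (X *v (matrix_inv X *v u))) - D *v (Y *v (matrix_inv X *v u)))))
       + (- (K *v (X *v (matrix_inv X *v u))) + transpose C *v (Y *v (matrix_inv X *v u)))
     = Y *v (matrix_inv X *v (C *v u)) + transpose C *v (Y *v (matrix_inv X *v u))
       + Y *v (matrix_inv X *v (D *v (Y *v (matrix_inv X *v u)))) - K *v u" for u
    by (simp only: matrix_inv_cancel[OF assms(1)] matrix_vector_mult_uminus_right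
        matrix_vector_mult_diff_distrib minus_diff_eq diff_minus_eq_add)
      (simp add: algebra_simps)
  then show ?thesis
    unfolding matrix_eq N_def
    by (simp only: matrix_vector_mul_assoc[symmetric] matrix_vector_mult_add_rdistrib
          matrix_vector_mult_diff_rdistrib matrix_vector_mult_uminus_left simp_thms)
qed

section \<open>Linear Hamiltonian flows and the Riccati equation\<close>

locale linear_hamiltonian_flow =
  fixes C D K :: "real^'m::finite^'m" and X Y :: "real \<Rightarrow> real^'m^'m"
  assumes K_symmetric: "transpose K = K" and D_symmetric: "transpose D = D"
    and X_deriv: "\<And>s. (X has_vector_derivative - (C ** X s) - D ** Y s) (at s)"
    and Y_deriv: "\<And>s. (Y has_vector_derivative - (K ** X s) + transpose C ** Y s) (at s)"
    and X_0: "X 0 = 0" and Y_0: "Y 0 = mat 1"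
begin

lemma X_apply_deriv:
  "((\<lambda>s. X s *v v) has_vector_derivative - (C *v (X s *v v)) - D *v (Y s *v v)) (at s)"
  using bounded_bilinear.has_vector_derivative[OF bounded_bilinear_matrix_vector_mult
      X_deriv has_vector_derivative_const[of v]]
  by (simp add: matrix_vector_mult_diff_rdistrib matrix_vector_mul_assoc matrix_vector_mult_uminus_left)

lemma Y_apply_deriv:
  "((\<lambda>s. Y s *v v) has_vector_derivative - (K *v (X s *v v)) + transpose C *v (Y s *v v)) (at s)"
  using bounded_bilinear.has_vector_derivative[OF bounded_bilinear_matrix_vector_mult
      Y_deriv has_vector_derivative_const[of v]]
  by (simp add: matrix_vector_mult_add_rdistrib matrix_vector_mult_diff_rdistrib matrix_vector_mul_assoc
      matrix_vector_mult_uminus_left del: transpose_matrix_vector)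

lemmas inner_has_vector_derivative = bounded_bilinear.has_vector_derivative[OF bounded_bilinear_inner]

lemma pairing_symmetric: "(Y s *v v) \<bullet> (X s *v w) = (X s *v v) \<bullet> (Y s *v w)"
proof -
  define h where "h s = (Y s *v v) \<bullet> (X s *v w) - (X s *v v) \<bullet> (Y s *v w)" for s
  have "(h has_real_derivative 0) (at s)" for s
  proof -
    let ?xv = "X s *v v" and ?yv = "Y s *v v" and ?xw = "X s *v w" and ?yw = "Y s *v w"
    have "(h has_vector_derivative
        ?yv \<bullet> (- (C *v ?xw) - D *v ?yw) + (- (K *v ?xv) + transpose C *v ?yv) \<bullet> ?xw
        - (?xv \<bullet> (- (K *v ?xw) + transpose C *v ?yw) + (- (C *v ?xv) - D *v ?yv) \<bullet> ?yw)) (at s)"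
      unfolding h_def[abs_def]
      by (intro has_vector_derivative_diff inner_has_vector_derivative X_apply_deriv Y_apply_deriv)
    moreover have "?yv \<bullet> (- (C *v ?xw) - D *v ?yw) + (- (K *v ?xv) + transpose C *v ?yv) \<bullet> ?xw
        - (?xv \<bullet> (- (K *v ?xw) + transpose C *v ?yw) + (- (C *v ?xv) - D *v ?yv) \<bullet> ?yw) = 0"
      by (simp add: inner_diff_left inner_diff_right inner_add_left inner_add_right
          inner_transpose_left inner_transpose_right inner_symmetric_matrix[OF K_symmetric]
          inner_symmetric_matrix[OF D_symmetric] del: transpose_matrix_vector)
    ultimately show ?thesis
      by (simp add: has_real_derivative_iff_has_vector_derivative)
  qed
  then have "h s = h 0"
    by (intro DERIV_isconst_all) auto
  then show ?thesis
    by (simp add: h_def X_0 Y_0)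
qed

text \<open>The flow is Hamiltonian, \<open>x' = -\<partial>\<^sub>yH/2\<close> and \<open>y' = \<partial>\<^sub>xH/2\<close>, so \<open>H\<close> is conserved.\<close>

definition hamiltonian :: "real^'m \<Rightarrow> real^'m \<Rightarrow> real" where
  "hamiltonian x y = y \<bullet> (D *v y) + 2 * ((C *v x) \<bullet> y) - x \<bullet> (K *v x)"

lemma hamiltonian_derivative_zero:
  fixes x y :: "real^'m"
  defines "x' \<equiv> - (C *v x) - D *v y" and "y' \<equiv> - (K *v x) + transpose C *v y"
  shows "y \<bullet> (D *v y') + y' \<bullet> (D *v y) + 2 * ((C *v x) \<bullet> y' + (C *v x') \<bullet> y)
        - (x \<bullet> (K *v x') + x' \<bullet> (K *v x)) = 0"
proof -
  have DC: "u \<bullet> (D *v (transpose C *v w)) = (C *v (D *v u)) \<bullet> w" for u w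
    by (metis inner_symmetric_matrix D_symmetric inner_transpose_right)
  show ?thesis
    unfolding x'_def y'_def
    by (simp add: inner_diff_left inner_diff_right inner_add_left inner_add_right
        matrix_vector_mult_uminus_right matrix_vector_mult_diff_distrib matrix_vector_right_distrib
        inner_transpose_left inner_transpose_right inner_symmetric_matrix[OF K_symmetric]
        inner_symmetric_matrix[OF D_symmetric] DC del: transpose_matrix_vector)
      (simp add: inner_commute, metis inner_commute inner_symmetric_matrix[OF K_symmetric])
qed

lemma hamiltonian_conserved: "hamiltonian (X s *v v) (Y s *v v) = v \<bullet> (D *v v)"
proof -
  define h where "h s = hamiltonian (X s *v v) (Y s *v v)" for s
  have "(h has_real_derivative 0) (at s)" for s
  proof -
    let ?x = "X s *v v" and ?y = "Y s *v v"
    let ?x' = "- (C *v ?x) - D *v ?y" and ?y' = "- (K *v ?x) + transpose C *v ?y"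
    have "(h has_vector_derivative
        ?y \<bullet> (D *v ?y') + ?y' \<bullet> (D *v ?y) + 2 * ((C *v ?x) \<bullet> ?y' + (C *v ?x') \<bullet> ?y)
        - (?x \<bullet> (K *v ?x') + ?x' \<bullet> (K *v ?x))) (at s)"
      unfolding h_def[abs_def] hamiltonian_def
      by (intro has_vector_derivative_add has_vector_derivative_diff has_vector_derivative_mult_right
          inner_has_vector_derivative has_vector_derivative_matrix_vector_mult_left
          X_apply_deriv Y_apply_deriv)
    moreover note hamiltonian_derivative_zero[where x = "X s *v v" and y = "Y s *v v"]
    ultimately show ?thesis
      by (simp add: has_real_derivative_iff_has_vector_derivative)
  qed
  then have "h s = h 0"
    by (intro DERIV_isconst_all) auto
  then show ?thesis
    by (simp add: h_def hamiltonian_def X_0 Y_0)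
qed

lemma pairing_deriv:
  "((\<lambda>s. (X s *v v) \<bullet> (Y s *v v)) has_real_derivative
     - ((X s *v v) \<bullet> (K *v (X s *v v)) + (Y s *v v) \<bullet> (D *v (Y s *v v)))) (at s)"
proof -
  let ?x = "X s *v v" and ?y = "Y s *v v"
  have "((\<lambda>s. (X s *v v) \<bullet> (Y s *v v)) has_vector_derivative
      ?x \<bullet> (- (K *v ?x) + transpose C *v ?y) + (- (C *v ?x) - D *v ?y) \<bullet> ?y) (at s)"
    by (intro inner_has_vector_derivative X_apply_deriv Y_apply_deriv)
  moreover have "?x \<bullet> (- (K *v ?x) + transpose C *v ?y) + (- (C *v ?x) - D *v ?y) \<bullet> ?y
      = - (?x \<bullet> (K *v ?x) + ?y \<bullet> (D *v ?y))"
    by (simp add: inner_diff_left inner_diff_right inner_add_left inner_add_right inner_transpose_right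
        inner_symmetric_matrix[OF D_symmetric] del: transpose_matrix_vector)
  ultimately show ?thesis
    by (simp add: has_real_derivative_iff_has_vector_derivative)
qed

lemma X_tendsto_0: "(X \<longlongrightarrow> 0) (at_right 0)"
  using has_vector_derivative_continuous[OF X_deriv[of 0]]
  by (auto simp: continuous_at X_0 intro: tendsto_mono[OF at_le])

lemma Y_tendsto_1: "(Y \<longlongrightarrow> mat 1) (at_right 0)"
  using has_vector_derivative_continuous[OF Y_deriv[of 0]]
  by (auto simp: continuous_at Y_0 intro: tendsto_mono[OF at_le])

definition riccati_solution :: "real \<Rightarrow> real^'m^'m" where
  "riccati_solution s = Y s ** matrix_inv (X s)"

lemma riccati_solution_has_vector_derivative:
  assumes "invertible (X t)"
  shows "(riccati_solution has_vector_derivative riccati_solution t ** C + transpose C ** riccati_solution t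
      + riccati_solution t ** D ** riccati_solution t - K) (at t)"
  using bounded_bilinear.has_vector_derivative[OF bounded_bilinear_matrix_matrix_mult Y_deriv
      has_vector_derivative_matrix_inv[OF X_deriv assms]]
  unfolding riccati_identity[OF assms] riccati_solution_def[abs_def] .

lemma riccati_solution_symmetric:
  assumes "invertible (X t)"
  shows "u \<bullet> (riccati_solution t *v p) = (riccati_solution t *v u) \<bullet> p"
  using pairing_symmetric[of t "matrix_inv (X t) *v u" "matrix_inv (X t) *v p"]
  by (simp add: riccati_solution_def matrix_inv_cancel[OF assms] matrix_vector_mul_assoc[symmetric])

lemma riccati_rhs_quadratic_form:
  fixes u :: "real^'m"
  assumes "invertible (X t)"
  defines "N \<equiv> riccati_solution t" and "v \<equiv> matrix_inv (X t) *v u"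
  shows "u \<bullet> ((N ** C + transpose C ** N + N ** D ** N - K) *v u) = v \<bullet> (D *v v)"
proof -
  have "u \<bullet> ((N ** C + transpose C ** N + N ** D ** N - K) *v u)
      = u \<bullet> (N *v (C *v u)) + u \<bullet> (transpose C *v (N *v u)) + u \<bullet> (N *v (D *v (N *v u))) - u \<bullet> (K *v u)"
    by (simp add: matrix_vector_mul_assoc[symmetric] matrix_vector_mult_add_rdistrib
        matrix_vector_mult_diff_rdistrib inner_add_right inner_diff_right del: transpose_matrix_vector)
  also have "\<dots> = hamiltonian u (N *v u)"
  proof -
    have "u \<bullet> (N *v (C *v u)) = (C *v u) \<bullet> (N *v u)"
      by (metis N_def inner_commute riccati_solution_symmetric[OF assms(1)])
    moreover have "u \<bullet> (N *v (D *v (N *v u))) = (N *v u) \<bullet> (D *v (N *v u))"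
      unfolding N_def by (rule riccati_solution_symmetric[OF assms(1)])
    ultimately show ?thesis
      by (simp add: hamiltonian_def inner_transpose_right del: transpose_matrix_vector)
  qed
  also have "\<dots> = hamiltonian (X t *v v) (Y t *v v)"
    by (simp add: v_def N_def riccati_solution_def matrix_vector_mul_assoc matrix_inv_right[OF assms(1)])
  also have "\<dots> = v \<bullet> (D *v v)"
    by (rule hamiltonian_conserved)
  finally show ?thesis .
qed

end

text \<open>\<open>controllable\<close> is the Kalman rank condition \<open>rank [D, CD] = dim\<close>, in kernel form.\<close>

locale controllable_hamiltonian_flow = linear_hamiltonian_flow +
  assumes K_nonneg: "mat_nonneg K" and D_nonneg: "mat_nonneg D"
    and controllable: "\<And>y. D *v y = 0 \<Longrightarrow> D *v (transpose C *v y) = 0 \<Longrightarrow> y = 0"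
begin

lemma pairing_antimono:
  assumes "a \<le> s"
  shows "(X s *v v) \<bullet> (Y s *v v) \<le> (X a *v v) \<bullet> (Y a *v v)"
  using assms
proof (rule DERIV_nonpos_imp_nonincreasing)
  fix r
  have "0 \<le> (X r *v v) \<bullet> (K *v (X r *v v))" "0 \<le> (Y r *v v) \<bullet> (D *v (Y r *v v))"
    using K_nonneg D_nonneg by (simp_all add: mat_nonneg_def)
  then show "\<exists>y. ((\<lambda>s. (X s *v v) \<bullet> (Y s *v v)) has_real_derivative y) (at r) \<and> y \<le> 0"
    using pairing_deriv by force
qed

lemma pairing_nonpos: "0 \<le> s \<Longrightarrow> (X s *v v) \<bullet> (Y s *v v) \<le> 0"
  using pairing_antimono[of 0 s v] by (simp add: X_0)

text \<open>If \<open>X t w = 0\<close>, the pairing along \<open>w\<close> vanishes at both ends of \<open>[0, t]\<close>, hence is constant, so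
  \<open>K x = 0\<close> and \<open>D y = 0\<close> throughout; differentiating \<open>D y = 0\<close> and using controllability gives
  \<open>y = 0\<close> on \<open>(0, t)\<close>, contradicting \<open>y(0) = w\<close> unless \<open>w = 0\<close>.\<close>

lemma flow_degenerates_on_kernel_of_X:
  assumes "X t *v w = 0" and s: "s \<in> {0<..<t}"
  shows "K *v (X s *v w) = 0 \<and> D *v (Y s *v w) = 0"
proof -
  have pairing_0: "(X r *v w) \<bullet> (Y r *v w) = 0" if "r \<in> {0<..<t}" for r
  proof -
    have "(X t *v w) \<bullet> (Y t *v w) \<le> (X r *v w) \<bullet> (Y r *v w)"
      using that by (intro pairing_antimono) simp
    moreover have "(X r *v w) \<bullet> (Y r *v w) \<le> 0"
      using that by (intro pairing_nonpos) simp
    ultimately show ?thesis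
      using assms(1) by simp
  qed
  have "((\<lambda>s. (X s *v w) \<bullet> (Y s *v w)) has_vector_derivative
      - ((X s *v w) \<bullet> (K *v (X s *v w)) + (Y s *v w) \<bullet> (D *v (Y s *v w)))) (at s)"
    using pairing_deriv[of w s] unfolding has_real_derivative_iff_has_vector_derivative .
  then have "- ((X s *v w) \<bullet> (K *v (X s *v w)) + (Y s *v w) \<bullet> (D *v (Y s *v w))) = 0"
    by (rule has_vector_derivative_eq_0_if_locally_0[where S="{0<..<t}"]) (use s pairing_0 in auto)
  moreover have "0 \<le> (X s *v w) \<bullet> (K *v (X s *v w))" "0 \<le> (Y s *v w) \<bullet> (D *v (Y s *v w))"
    using K_nonneg D_nonneg by (simp_all add: mat_nonneg_def)
  ultimately have "(X s *v w) \<bullet> (K *v (X s *v w)) = 0" "(Y s *v w) \<bullet> (D *v (Y s *v w)) = 0"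
    by linarith+
  then show ?thesis
    using mat_nonneg_quadratic_form_zero K_symmetric K_nonneg D_symmetric D_nonneg by blast
qed

lemma Y_vanishes_on_kernel_of_X:
  assumes "X t *v w = 0" and s: "s \<in> {0<..<t}"
  shows "Y s *v w = 0"
proof (rule controllable)
  note degenerate = flow_degenerates_on_kernel_of_X[OF assms(1)]
  show "D *v (Y s *v w) = 0"
    using degenerate s by blast
  have "D *v (- (K *v (X s *v w)) + transpose C *v (Y s *v w)) = 0"
    using has_vector_derivative_matrix_vector_mult_left[OF Y_apply_deriv]
    by (rule has_vector_derivative_eq_0_if_locally_0[where S="{0<..<t}"]) (use s degenerate in auto)
  then show "D *v (transpose C *v (Y s *v w)) = 0"
    using degenerate s by (simp add: matrix_vector_right_distrib del: transpose_matrix_vector)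
qed

lemma X_invertible:
  assumes "0 < t"
  shows "invertible (X t)"
  unfolding invertible_iff_trivial_kernel
proof (intro allI impI)
  fix w
  assume "X t *v w = 0"
  then have "\<forall>\<^sub>F s in at_right 0. Y s *v w = 0"
    unfolding eventually_at_right_field using assms Y_vanishes_on_kernel_of_X by auto
  then have "((\<lambda>s. Y s *v w) \<longlongrightarrow> 0) (at_right 0)"
    by (rule tendsto_eventually)
  moreover have "((\<lambda>s. Y s *v w) \<longlongrightarrow> mat 1 *v w) (at_right 0)"
    by (intro bounded_bilinear.tendsto[OF bounded_bilinear_matrix_vector_mult] Y_tendsto_1 tendsto_const)
  ultimately show "w = 0"
    using tendsto_unique[of "at_right (0::real)"] by fastforce
qed

lemma riccati_solution_nonpos:
  assumes "0 < t"
  shows "mat_nonpos (riccati_solution t)"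
  unfolding mat_nonpos_def
proof
  fix u
  have "invertible (X t)"
    using X_invertible[OF assms] .
  then show "u \<bullet> (riccati_solution t *v u) \<le> 0"
    using pairing_nonpos[of t "matrix_inv (X t) *v u"] assms
    by (simp add: riccati_solution_def matrix_inv_cancel matrix_vector_mul_assoc[symmetric] inner_commute)
qed

lemma riccati_solution_derivative_nonneg:
  assumes "0 < t"
  shows "mat_nonneg (vector_derivative riccati_solution (at t))"
  using riccati_rhs_quadratic_form[OF X_invertible[OF assms]] D_nonneg
  by (simp add: vector_derivative_at[OF riccati_solution_has_vector_derivative[OF X_invertible[OF assms]]]
      mat_nonneg_def)

lemma eventually_invertible_X_Y: "\<forall>\<^sub>F s in at_right 0. invertible (X s) \<and> invertible (Y s)"
proof -
  have "\<forall>\<^sub>F s in at_right 0. det (Y s) \<noteq> 0"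
    using tendsto_imp_eventually_ne[OF tendsto_det[OF Y_tendsto_1]] by simp
  then show ?thesis
    using eventually_at_right_less[of "0::real"]
    by eventually_elim (metis X_invertible invertible_det_nz)
qed

lemma eventually_invertible_riccati_solution:
  "\<forall>\<^sub>F s in at_right 0. invertible (riccati_solution s)"
  using eventually_invertible_X_Y
  by eventually_elim (simp add: riccati_solution_def invertible_mult invertible_matrix_inv)

lemma tendsto_matrix_inv_riccati_solution:
  "((\<lambda>s. matrix_inv (riccati_solution s)) \<longlongrightarrow> 0) (at_right 0)"
proof -
  have "((\<lambda>s. X s ** matrix_inv (Y s)) \<longlongrightarrow> 0 ** matrix_inv (mat 1)) (at_right 0)"
    by (intro bounded_bilinear.tendsto[OF bounded_bilinear_matrix_matrix_mult] X_tendsto_0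
        tendsto_matrix_inv[OF Y_tendsto_1]) (simp add: invertible_def)
  moreover have "\<forall>\<^sub>F s in at_right 0. X s ** matrix_inv (Y s) = matrix_inv (riccati_solution s)"
    using eventually_invertible_X_Y
  proof eventually_elim
    case (elim s)
    then have "riccati_solution s ** (X s ** matrix_inv (Y s)) = mat 1"
      by (simp add: riccati_solution_def matrix_mul_assoc matrix_inv_left matrix_inv_right
          flip: matrix_mul_assoc[of "Y s"])
    then show ?case
      by (rule matrix_inv_unique[symmetric])
  qed
  ultimately show ?thesis
    by (simp add: Lim_transform_eventually)
qed

end

lemma linear_hamiltonian_flow_exists:
  fixes C D K :: "real^'m::finite^'m"
  assumes "transpose K = K" and "transpose D = D"
  shows "\<exists>X Y. linear_hamiltonian_flow C D K X Y"
proof -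
  define f :: "(real^'m^'m) \<times> (real^'m^'m) \<Rightarrow> (real^'m^'m) \<times> (real^'m^'m)"
    where "f = (\<lambda>(P, Q). (- (C ** P) - D ** Q, - (K ** P) + transpose C ** Q))"
  have "linear f"
    unfolding linear_iff f_def
    by (auto simp: matrix_add_ldistrib scalar_matrix_assoc matrix_scalar_ac algebra_simps)
  from linear_ode_solution_exists[OF this, of "(0, mat 1)"] obtain z
    where "z 0 = (0, mat 1)" and z: "\<And>t. (z has_vector_derivative f (z t)) (at t)"
    by blast
  then have "linear_hamiltonian_flow C D K (fst \<circ> z) (snd \<circ> z)"
    using bounded_linear.has_vector_derivative[OF bounded_linear_fst z]
      bounded_linear.has_vector_derivative[OF bounded_linear_snd z] assms
    by unfold_locales (auto simp: f_def case_prod_beta o_def)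
  then show ?thesis
    by blast
qed

lemma sum_UNIV_Plus: "sum g (UNIV :: ('a::finite + 'b::finite) set) = sum (g \<circ> Inl) UNIV + sum (g \<circ> Inr) UNIV"
  by (subst UNIV_Plus_UNIV[symmetric], rule sum.Plus) auto

lemma Dmat_apply: "(Dmat *v y) $ i = (case i of Inl a \<Rightarrow> 0 | Inr a \<Rightarrow> 2 * y $ Inr a)"
  by (cases i) (simp_all add: Dmat_def matrix_vector_mult_def sum_UNIV_Plus if_distrib if_distribR cong: if_cong)

lemma transpose_Cmat_apply: "(transpose Cmat *v y) $ i = (case i of Inl a \<Rightarrow> 0 | Inr a \<Rightarrow> - y $ Inl a)"
  by (cases i) (simp_all add: Cmat_def transpose_def matrix_vector_mult_def sum_UNIV_Plus
      if_distrib if_distribR cong: if_cong del: transpose_matrix_vector)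

lemma Dmat_symmetric: "transpose Dmat = Dmat"
  by (auto simp: Dmat_def transpose_def vec_eq_iff split: sum.splits)

lemma Dmat_nonneg: "mat_nonneg Dmat"
  by (simp add: mat_nonneg_def inner_vec_def sum_UNIV_Plus Dmat_apply sum_nonneg)

lemma Cmat_Dmat_controllable:
  fixes y :: "real^('n::finite + 'n)"
  assumes "Dmat *v y = 0" and "Dmat *v (transpose Cmat *v y) = 0"
  shows "y = 0"
proof (rule vec_eq_iff[THEN iffD2], rule allI)
  fix i :: "'n + 'n"
  obtain a where "i = Inl a \<or> i = Inr a"
    by (cases i) auto
  moreover have "(Dmat *v y) $ Inr a = 0" "(Dmat *v (transpose Cmat *v y)) $ Inr a = 0"
    using assms by simp_all
  ultimately show "y $ i = 0 $ i"
    by (auto simp: Dmat_apply transpose_Cmat_apply simp del: transpose_matrix_vector)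
qed

theorem lemma3p1:
  fixes K :: "real^('n::finite + 'n)^('n + 'n)"
  assumes "transpose K = K" and "mat_nonneg K"
  shows "\<exists>N :: real \<Rightarrow> real^('n + 'n)^('n + 'n).
           (\<forall>t>0. (N has_vector_derivative
               (N t ** Cmat + transpose Cmat ** N t + N t ** Dmat ** N t - K)) (at t))
         \<and> (\<forall>\<^sub>F t in at_right 0. invertible (N t))
         \<and> ((\<lambda>t. matrix_inv (N t)) \<longlongrightarrow> 0) (at_right 0)
         \<and> (\<forall>t>0. mat_nonpos (N t))
         \<and> (\<forall>t>0. mat_nonneg (vector_derivative N (at t)))"
proof -
  obtain X Y where "linear_hamiltonian_flow Cmat Dmat K X Y"
    using linear_hamiltonian_flow_exists[OF assms(1) Dmat_symmetric] by blast
  then interpret controllable_hamiltonian_flow Cmat Dmat K X Y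
    using assms(2) Dmat_nonneg Cmat_Dmat_controllable
    by (intro controllable_hamiltonian_flow.intro controllable_hamiltonian_flow_axioms.intro) auto
  show ?thesis
    using riccati_solution_has_vector_derivative[OF X_invertible] eventually_invertible_riccati_solution
      tendsto_matrix_inv_riccati_solution riccati_solution_nonpos riccati_solution_derivative_nonneg
    by blast
qed

end
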